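(* Let $D$ be a core digraph without non-trivial automorphisms such that the almost-sure theory of the class of $D$-coloured digraphs equals the theory of $C_D$. Then asymptotically almost surely, a graph from $\mathrm{Csp}(D)$ has exactly one homomorphism to $D$.
   Context: $D$ is a finite digraph. $\mathrm{Csp}(D)$ is the class of all finite digraphs with a homomorphism to $D$. A $D$-coloured digraph is a digraph $G$ with unary predicates $P_u$ ($u \in V(D)$) such that each vertex lies in exactly one $P_u$ and the map sending $x \in P_u$ to $u$ is a homomorphism $G \to D$. $C_D$ is the (unique up to isomorphism) countable homogeneous $D$-coloured digraph whose finite substructures are exactly the finite $D$-coloured digraphs. A core is a finite digraph all of whose endomorphisms are automorphisms. Random graphs are drawn uniformly from those with vertex set $\{1,\dots,n\}$. *)

theory Defs
  imports Complex_Main "HOL-Library.FuncSet"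
begin

text \<open>The target digraph D has a finite vertex type 'd and edge relation ED (loops allowed).
  Finite digraphs on vertex set {1..n} are edge sets E \<subseteq> {1..n} \<times> {1..n}.\<close>

definition is_endo :: "('d \<Rightarrow> 'd \<Rightarrow> bool) \<Rightarrow> ('d \<Rightarrow> 'd) \<Rightarrow> bool" where
  "is_endo ED h \<longleftrightarrow> (\<forall>x y. ED x y \<longrightarrow> ED (h x) (h y))"

definition is_auto :: "('d \<Rightarrow> 'd \<Rightarrow> bool) \<Rightarrow> ('d \<Rightarrow> 'd) \<Rightarrow> bool" where
  "is_auto ED h \<longleftrightarrow> bij h \<and> (\<forall>x y. ED x y \<longleftrightarrow> ED (h x) (h y))"

definition is_core :: "('d::finite \<Rightarrow> 'd \<Rightarrow> bool) \<Rightarrow> bool" where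
  "is_core ED \<longleftrightarrow> (\<forall>h. is_endo ED h \<longrightarrow> is_auto ED h)"

definition homs_to :: "('d \<Rightarrow> 'd \<Rightarrow> bool) \<Rightarrow> nat \<Rightarrow> (nat \<times> nat) set \<Rightarrow> (nat \<Rightarrow> 'd) set" where
  "homs_to ED n E = {h \<in> {1..n} \<rightarrow>\<^sub>E UNIV. \<forall>(x,y)\<in>E. ED (h x) (h y)}"

definition csp_graphs :: "('d \<Rightarrow> 'd \<Rightarrow> bool) \<Rightarrow> nat \<Rightarrow> (nat \<times> nat) set set" where
  "csp_graphs ED n = {E. E \<subseteq> {1..n} \<times> {1..n} \<and> homs_to ED n E \<noteq> {}}"

definition coloured_graphs :: "('d \<Rightarrow> 'd \<Rightarrow> bool) \<Rightarrow> nat \<Rightarrow> ((nat \<times> nat) set \<times> (nat \<Rightarrow> 'd)) set" where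
  "coloured_graphs ED n = {(E, c). E \<subseteq> {1..n} \<times> {1..n} \<and> c \<in> homs_to ED n E}"

text \<open>First-order formulas in the signature {E} \<union> {P_u : u \<in> V(D)} with equality;
  variables are natural numbers.\<close>
datatype 'u fm = Eq nat nat | Edge nat nat | Col 'u nat | Neg "'u fm" | Conj "'u fm" "'u fm"
  | Ex nat "'u fm"

fun fv :: "'u fm \<Rightarrow> nat set" where
  "fv (Eq x y) = {x, y}"
| "fv (Edge x y) = {x, y}"
| "fv (Col u x) = {x}"
| "fv (Neg \<phi>) = fv \<phi>"
| "fv (Conj \<phi> \<psi>) = fv \<phi> \<union> fv \<psi>"
| "fv (Ex x \<phi>) = fv \<phi> - {x}"

definition sentence :: "'u fm \<Rightarrow> bool" where
  "sentence \<phi> \<longleftrightarrow> fv \<phi> = {}"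

text \<open>Satisfaction in a structure with domain V, edge relation R and colouring c
  (c x = u means x \<in> P_u).\<close>
fun sat :: "'v set \<Rightarrow> ('v \<Rightarrow> 'v \<Rightarrow> bool) \<Rightarrow> ('v \<Rightarrow> 'u) \<Rightarrow> (nat \<Rightarrow> 'v) \<Rightarrow> 'u fm \<Rightarrow> bool" where
  "sat V R c a (Eq x y) \<longleftrightarrow> a x = a y"
| "sat V R c a (Edge x y) \<longleftrightarrow> R (a x) (a y)"
| "sat V R c a (Col u x) \<longleftrightarrow> c (a x) = u"
| "sat V R c a (Neg \<phi>) \<longleftrightarrow> \<not> sat V R c a \<phi>"
| "sat V R c a (Conj \<phi> \<psi>) \<longleftrightarrow> sat V R c a \<phi> \<and> sat V R c a \<psi>"
| "sat V R c a (Ex x \<phi>) \<longleftrightarrow> (\<exists>v\<in>V. sat V R c (a(x := v)) \<phi>)"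

definition models :: "'v set \<Rightarrow> ('v \<Rightarrow> 'v \<Rightarrow> bool) \<Rightarrow> ('v \<Rightarrow> 'u) \<Rightarrow> 'u fm \<Rightarrow> bool" where
  "models V R c \<phi> \<longleftrightarrow> (\<forall>a. (\<forall>x. a x \<in> V) \<longrightarrow> sat V R c a \<phi>)"

definition almost_sure_col :: "('d \<Rightarrow> 'd \<Rightarrow> bool) \<Rightarrow> 'd fm \<Rightarrow> bool" where
  "almost_sure_col ED \<phi> \<longleftrightarrow>
     ((\<lambda>n. real (card {G \<in> coloured_graphs ED n. models {1..n} (\<lambda>x y. (x, y) \<in> fst G) (snd G) \<phi>})
          / real (card (coloured_graphs ED n))) \<longlonglongrightarrow> 1)"

text \<open>C_D: a countably infinite (domain nat) homogeneous D-coloured digraph whose finite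
  substructures are exactly the finite D-coloured digraphs.\<close>
definition is_CD :: "('d \<Rightarrow> 'd \<Rightarrow> bool) \<Rightarrow> (nat \<Rightarrow> nat \<Rightarrow> bool) \<Rightarrow> (nat \<Rightarrow> 'd) \<Rightarrow> bool" where
  "is_CD ED R c \<longleftrightarrow>
     (\<forall>x y. R x y \<longrightarrow> ED (c x) (c y)) \<and>
     (\<forall>(m::nat) (Rm :: nat \<Rightarrow> nat \<Rightarrow> bool) (cm :: nat \<Rightarrow> 'd).
        (\<forall>x<m. \<forall>y<m. Rm x y \<longrightarrow> ED (cm x) (cm y)) \<longrightarrow>
        (\<exists>f. inj_on f {..<m} \<and> (\<forall>x<m. \<forall>y<m. R (f x) (f y) \<longleftrightarrow> Rm x y) \<and>
             (\<forall>x<m. c (f x) = cm x))) \<and>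
     (\<forall>A f. finite A \<and> inj_on f A \<and> (\<forall>x\<in>A. \<forall>y\<in>A. R (f x) (f y) \<longleftrightarrow> R x y) \<and>
            (\<forall>x\<in>A. c (f x) = c x) \<longrightarrow>
        (\<exists>g. bij g \<and> (\<forall>x y. R (g x) (g y) \<longleftrightarrow> R x y) \<and> (\<forall>x. c (g x) = c x) \<and>
             (\<forall>x\<in>A. g x = f x)))"

definition theory_CD :: "('d \<Rightarrow> 'd \<Rightarrow> bool) \<Rightarrow> 'd fm \<Rightarrow> bool" where
  "theory_CD ED \<phi> \<longleftrightarrow> (\<forall>R c. is_CD ED R c \<longrightarrow> models UNIV R c \<phi>)"

end

theory Submission
  imports Defs "HOL-Library.Countable"
begin

(* Call a D-coloured digraph G covered by copies if every vertex x lies on a homomorphic image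
   b of D in G with b (colour x) = x. Then the colouring is the only homomorphism G \<rightarrow> D: for
   any homomorphism g, the map g \<circ> b is an endomorphism of the core D, hence an automorphism,
   hence the identity, so g x = g (b (colour x)) = colour x.
   Being covered by copies is first-order, and C_D has this property: universality embeds a
   copy of D, and homogeneity moves it onto any vertex of the right colour (this needs D
   loopless; a core with a loop is a single vertex, where homomorphisms are unique anyway).
   By the transfer hypothesis almost all D-coloured digraphs are covered by copies. Forgetting
   the colouring maps these injectively to digraphs with a unique homomorphism to D, and there
   are at least as many D-coloured digraphs on {1..n} as members of Csp(D), so the proportion
   of the latter with a unique homomorphism tends to 1 as well. *)

fun conjs :: "'u fm list \<Rightarrow> 'u fm" where
  "conjs [] = Eq 0 0"
| "conjs (p # ps) = Conj p (conjs ps)"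

fun exs :: "nat list \<Rightarrow> 'u fm \<Rightarrow> 'u fm" where
  "exs [] p = p"
| "exs (x # xs) p = Ex x (exs xs p)"

abbreviation Imp :: "'u fm \<Rightarrow> 'u fm \<Rightarrow> 'u fm" where
  "Imp p q \<equiv> Neg (Conj p (Neg q))"

lemma sat_conjs [simp]: "sat V R c a (conjs ps) \<longleftrightarrow> (\<forall>p\<in>set ps. sat V R c a p)"
  by (induction ps) auto

lemma fv_conjs [simp]: "fv (conjs ps) = insert 0 (\<Union>(fv ` set ps))"
  by (induction ps) auto

lemma fv_exs [simp]: "fv (exs xs p) = fv p - set xs"
  by (induction xs) auto

lemma sat_exs:
  "sat V R c a (exs xs p) \<longleftrightarrow>
     (\<exists>b. (\<forall>i\<in>set xs. b i \<in> V) \<and> sat V R c (override_on a b (set xs)) p)"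
proof (induction xs arbitrary: a)
  case Nil
  then show ?case by simp
next
  case (Cons x xs)
  show ?case
  proof
    assume "sat V R c a (exs (x # xs) p)"
    then obtain v where v: "v \<in> V" and "sat V R c (a(x := v)) (exs xs p)"
      by auto
    then obtain b where b: "\<forall>i\<in>set xs. b i \<in> V"
      and sat_b: "sat V R c (override_on (a(x := v)) b (set xs)) p"
      using Cons.IH by blast
    define b' where "b' = override_on (\<lambda>_. v) b (set xs)"
    have eq: "override_on (a(x := v)) b (set xs) = override_on a b' (set (x # xs))"
      by (auto simp: b'_def override_on_def)
    have "\<forall>i\<in>set (x # xs). b' i \<in> V"
      using v b by (simp add: b'_def override_on_def)
    moreover have "sat V R c (override_on a b' (set (x # xs))) p"
      using sat_b unfolding eq .
    ultimately show "\<exists>b. (\<forall>i\<in>set (x # xs). b i \<in> V) \<and> sat V R c (override_on a b (set (x # xs))) p"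
      by blast
  next
    assume "\<exists>b. (\<forall>i\<in>set (x # xs). b i \<in> V) \<and> sat V R c (override_on a b (set (x # xs))) p"
    then obtain b where b: "\<forall>i\<in>set (x # xs). b i \<in> V"
      and sat_b: "sat V R c (override_on a b (set (x # xs))) p"
      by blast
    have eq: "override_on a b (set (x # xs)) = override_on (a(x := b x)) b (set xs)"
      by (auto simp: override_on_def)
    have "\<forall>i\<in>set xs. b i \<in> V"
      using b by simp
    then have "sat V R c (a(x := b x)) (exs xs p)"
      using Cons.IH[of "a(x := b x)"] sat_b unfolding eq by blast
    moreover have "b x \<in> V"
      using b by simp
    ultimately show "sat V R c a (exs (x # xs) p)"
      by auto
  qed
qed

definition vertex_var :: "'d::countable \<Rightarrow> nat" where
  "vertex_var v = Suc (to_nat v)"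

lemma inj_vertex_var: "inj vertex_var"
  by (auto simp: inj_def vertex_var_def)

lemma zero_notin_range_vertex_var [simp]: "0 \<notin> range vertex_var"
  by (auto simp: vertex_var_def)

definition hom_fm :: "('d::countable \<Rightarrow> 'd \<Rightarrow> bool) \<Rightarrow> 'd list \<Rightarrow> 'd fm" where
  "hom_fm ED ds = conjs [Edge (vertex_var v) (vertex_var w). v \<leftarrow> ds, w \<leftarrow> ds, ED v w]"

definition pin_fm :: "'d::countable list \<Rightarrow> 'd fm" where
  "pin_fm ds = conjs [Imp (Col u 0) (Eq 0 (vertex_var u)). u \<leftarrow> ds]"

(* Variable 0 is x and vertex_var v is the image y_v of v: the sentence reads
   "for all x there are (y_v) forming a homomorphic image of D with y_(colour x) = x". *)
definition copy_fm :: "('d::countable \<Rightarrow> 'd \<Rightarrow> bool) \<Rightarrow> 'd list \<Rightarrow> 'd fm" where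
  "copy_fm ED ds = Neg (Ex 0 (Neg (exs (map vertex_var ds) (Conj (hom_fm ED ds) (pin_fm ds)))))"

definition covered_by_copies :: "('d \<Rightarrow> 'd \<Rightarrow> bool) \<Rightarrow> 'v set \<Rightarrow> ('v \<Rightarrow> 'v \<Rightarrow> bool) \<Rightarrow> ('v \<Rightarrow> 'd) \<Rightarrow> bool" where
  "covered_by_copies ED V R c \<longleftrightarrow>
     (\<forall>x\<in>V. \<exists>b. range b \<subseteq> V \<and> (\<forall>v w. ED v w \<longrightarrow> R (b v) (b w)) \<and> b (c x) = x)"

lemma sat_hom_fm:
  assumes "set ds = UNIV"
  shows "sat V R c a (hom_fm ED ds) \<longleftrightarrow> (\<forall>v w. ED v w \<longrightarrow> R (a (vertex_var v)) (a (vertex_var w)))"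
  using assms by (auto simp: hom_fm_def)

lemma sat_pin_fm:
  assumes "set ds = UNIV"
  shows "sat V R c a (pin_fm ds) \<longleftrightarrow> a (vertex_var (c (a 0))) = a 0"
  using assms by (auto simp: pin_fm_def)

lemma sentence_copy_fm:
  fixes ds :: "'d::countable list"
  assumes "set ds = UNIV"
  shows "sentence (copy_fm ED ds)"
proof -
  have "fv (hom_fm ED ds) \<subseteq> insert 0 (range (vertex_var :: 'd \<Rightarrow> nat))"
    and "fv (pin_fm ds) \<subseteq> insert 0 (range (vertex_var :: 'd \<Rightarrow> nat))"
    by (auto simp: hom_fm_def pin_fm_def)
  moreover have "set (map vertex_var ds) = range (vertex_var :: 'd \<Rightarrow> nat)"
    using assms by auto
  ultimately show ?thesis
    by (auto simp: sentence_def copy_fm_def)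
qed

lemma sat_copy_fm:
  fixes ds :: "'d::countable list"
  assumes "set ds = UNIV"
  shows "sat V R c a (copy_fm ED ds) \<longleftrightarrow> covered_by_copies ED V R c"
proof -
  have "sat V R c a (copy_fm ED ds) \<longleftrightarrow>
    (\<forall>x\<in>V. \<exists>b. (\<forall>v::'d. b (vertex_var v) \<in> V) \<and>
       (\<forall>v w. ED v w \<longrightarrow> R (b (vertex_var v)) (b (vertex_var w))) \<and> b (vertex_var (c x)) = x)"
    unfolding copy_fm_def by (simp add: sat_exs assms sat_hom_fm[OF assms] sat_pin_fm[OF assms])
  also have "\<dots> \<longleftrightarrow> covered_by_copies ED V R c"
    unfolding covered_by_copies_def
  proof (intro ball_cong refl iffI)
    fix x
    assume "\<exists>b. (\<forall>v::'d. b (vertex_var v) \<in> V) \<and>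
       (\<forall>v w. ED v w \<longrightarrow> R (b (vertex_var v)) (b (vertex_var w))) \<and> b (vertex_var (c x)) = x"
    then obtain b where "(\<forall>v::'d. b (vertex_var v) \<in> V) \<and>
       (\<forall>v w. ED v w \<longrightarrow> R (b (vertex_var v)) (b (vertex_var w))) \<and> b (vertex_var (c x)) = x" ..
    then show "\<exists>b. range b \<subseteq> V \<and> (\<forall>v w. ED v w \<longrightarrow> R (b v) (b w)) \<and> b (c x) = x"
      by (intro exI[of _ "b \<circ> vertex_var"]) auto
  next
    fix x
    assume "\<exists>b. range b \<subseteq> V \<and> (\<forall>v w. ED v w \<longrightarrow> R (b v) (b w)) \<and> b (c x) = x"
    then obtain b where "range b \<subseteq> V \<and> (\<forall>v w. ED v w \<longrightarrow> R (b v) (b w)) \<and> b (c x) = x" ..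
    then show "\<exists>b. (\<forall>v::'d. b (vertex_var v) \<in> V) \<and>
       (\<forall>v w. ED v w \<longrightarrow> R (b (vertex_var v)) (b (vertex_var w))) \<and> b (vertex_var (c x)) = x"
      by (intro exI[of _ "b \<circ> inv vertex_var"]) (auto simp: inj_vertex_var)
  qed
  finally show ?thesis .
qed

lemma models_copy_fm:
  assumes "set ds = UNIV" and "V \<noteq> {}"
  shows "models V R c (copy_fm ED ds) \<longleftrightarrow> covered_by_copies ED V R c"
  using assms by (auto simp: models_def sat_copy_fm)

lemma CD_edge_colours:
  assumes "is_CD ED R c" and "R x y"
  shows "ED (c x) (c y)"
  using assms by (simp add: is_CD_def)

lemma CD_universal:
  fixes m :: nat
  assumes "is_CD ED R c" and "\<forall>x<m. \<forall>y<m. Rm x y \<longrightarrow> ED (cm x) (cm y)"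
  shows "\<exists>f. inj_on f {..<m} \<and> (\<forall>x<m. \<forall>y<m. R (f x) (f y) \<longleftrightarrow> Rm x y) \<and> (\<forall>x<m. c (f x) = cm x)"
  using assms(1)[unfolded is_CD_def, THEN conjunct2, THEN conjunct1, THEN spec, THEN spec, THEN spec]
    assms(2) by (rule mp)

lemma CD_homogeneous:
  assumes "is_CD ED R c" and "finite A" and "inj_on f A"
    and "\<forall>x\<in>A. \<forall>y\<in>A. R (f x) (f y) \<longleftrightarrow> R x y" and "\<forall>x\<in>A. c (f x) = c x"
  shows "\<exists>g. bij g \<and> (\<forall>x y. R (g x) (g y) \<longleftrightarrow> R x y) \<and> (\<forall>x. c (g x) = c x) \<and> (\<forall>x\<in>A. g x = f x)"
  using assms(1)[unfolded is_CD_def, THEN conjunct2, THEN conjunct2, THEN spec, THEN spec] assms(2-)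
  by (blast intro: mp)

lemma CD_contains_copy:
  fixes ED :: "'d::finite \<Rightarrow> 'd \<Rightarrow> bool"
  assumes "is_CD ED R c"
  shows "\<exists>b. (\<forall>v w. ED v w \<longrightarrow> R (b v) (b w)) \<and> (\<forall>v. c (b v) = v)"
proof -
  define m where "m = card (UNIV :: 'd set)"
  obtain e :: "nat \<Rightarrow> 'd" where e: "bij_betw e {..<m} UNIV"
    using ex_bij_betw_nat_finite[of "UNIV :: 'd set"] by (auto simp: m_def atLeast0LessThan)
  obtain f where f: "\<forall>x<m. \<forall>y<m. R (f x) (f y) \<longleftrightarrow> ED (e x) (e y)" "\<forall>x<m. c (f x) = e x"
    using CD_universal[OF assms, of m "\<lambda>x y. ED (e x) (e y)" e] by blast
  have "inv_into {..<m} e v < m" "e (inv_into {..<m} e v) = v" for v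
    using e inv_into_into[of v e "{..<m}"] by (auto simp: bij_betw_def f_inv_into_f)
  then show ?thesis
    using f by (intro exI[of _ "f \<circ> inv_into {..<m} e"]) auto
qed

lemma CD_covered_by_copies:
  fixes ED :: "'d::finite \<Rightarrow> 'd \<Rightarrow> bool"
  assumes loopless: "\<forall>u. \<not> ED u u" and CD: "is_CD ED R c"
  shows "covered_by_copies ED UNIV R c"
  unfolding covered_by_copies_def
proof
  fix x
  obtain b where b: "\<forall>v w. ED v w \<longrightarrow> R (b v) (b w)" "\<forall>v. c (b v) = v"
    using CD_contains_copy[OF CD] by blast
  \<comment> \<open>homogeneity applies to b (c x) \<mapsto> x since neither vertex carries a loop\<close>
  have no_loops: "\<not> R y y" for y
    using CD_edge_colours[OF CD] loopless by blast
  have "\<exists>g. bij g \<and> (\<forall>x y. R (g x) (g y) \<longleftrightarrow> R x y) \<and> (\<forall>x. c (g x) = c x) \<and>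
      (\<forall>y\<in>{b (c x)}. g y = x)"
    by (rule CD_homogeneous[OF CD]) (simp_all add: no_loops b(2))
  then obtain g where "\<forall>x y. R (g x) (g y) \<longleftrightarrow> R x y" "g (b (c x)) = x"
    by blast
  then show "\<exists>b. range b \<subseteq> UNIV \<and> (\<forall>v w. ED v w \<longrightarrow> R (b v) (b w)) \<and> b (c x) = x"
    using b(1) by (intro exI[of _ "g \<circ> b"]) auto
qed

lemma theory_CD_copy_fm:
  fixes ED :: "'d::finite \<Rightarrow> 'd \<Rightarrow> bool"
  assumes "\<forall>u. \<not> ED u u" and "set ds = UNIV"
  shows "theory_CD ED (copy_fm ED ds)"
  by (simp add: theory_CD_def models_copy_fm[OF assms(2) UNIV_not_empty] CD_covered_by_copies[of ED, OF assms(1)])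

lemma homs_to_eq_singletonI:
  assumes "h \<in> homs_to ED n E" and "\<And>g x. g \<in> homs_to ED n E \<Longrightarrow> x \<in> {1..n} \<Longrightarrow> g x = h x"
  shows "homs_to ED n E = {h}"
proof -
  have "g = h" if "g \<in> homs_to ED n E" for g
    using that assms by (intro PiE_ext[of _ "{1..n}" "\<lambda>_. UNIV"]) (auto simp: homs_to_def)
  then show ?thesis
    using assms(1) by blast
qed

lemma core_with_loop_trivial:
  fixes ED :: "'d::finite \<Rightarrow> 'd \<Rightarrow> bool"
  fixes x y :: 'd
  assumes "is_core ED" and "ED u u"
  shows "x = y"
proof -
  have "is_endo ED (\<lambda>_. u)"
    using assms(2) by (simp add: is_endo_def)
  then have "bij (\<lambda>_::'d. u)"
    using assms(1) by (simp add: is_core_def is_auto_def)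
  then show ?thesis
    unfolding bij_def inj_def by blast
qed

definition uniquely_coloured_graphs :: "('d \<Rightarrow> 'd \<Rightarrow> bool) \<Rightarrow> nat \<Rightarrow> ((nat \<times> nat) set \<times> (nat \<Rightarrow> 'd)) set" where
  "uniquely_coloured_graphs ED n = {G \<in> coloured_graphs ED n. homs_to ED n (fst G) = {snd G}}"

lemma uniquely_coloured_graphs_trivial_target:
  fixes ED :: "'d \<Rightarrow> 'd \<Rightarrow> bool"
  assumes "\<And>x y :: 'd. x = y"
  shows "uniquely_coloured_graphs ED n = coloured_graphs ED n"
proof (intro equalityI subsetI)
  fix G
  assume G: "G \<in> coloured_graphs ED n"
  then have "homs_to ED n (fst G) = {snd G}"
    by (intro homs_to_eq_singletonI) (auto simp: coloured_graphs_def intro: assms)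
  with G show "G \<in> uniquely_coloured_graphs ED n"
    by (simp add: uniquely_coloured_graphs_def)
qed (simp add: uniquely_coloured_graphs_def)

lemma homs_to_eq_singleton_if_covered:
  fixes ED :: "'d::finite \<Rightarrow> 'd \<Rightarrow> bool"
  assumes "is_core ED" and rigid: "\<forall>h. is_auto ED h \<longrightarrow> h = id"
    and covered: "covered_by_copies ED {1..n} (\<lambda>x y. (x, y) \<in> E) h"
    and "h \<in> homs_to ED n E"
  shows "homs_to ED n E = {h}"
proof (rule homs_to_eq_singletonI[OF assms(4)])
  fix g x
  assume g: "g \<in> homs_to ED n E" and "x \<in> {1..n}"
  then obtain b where b: "range b \<subseteq> {1..n}" "\<forall>v w. ED v w \<longrightarrow> (b v, b w) \<in> E" "b (h x) = x"
    using covered unfolding covered_by_copies_def by blast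
  have "is_endo ED (g \<circ> b)"
    using b(2) g by (auto simp: is_endo_def homs_to_def)
  then have "g \<circ> b = id"
    using assms(1) rigid by (simp add: is_core_def)
  then show "g x = h x"
    using b(3) by (metis comp_apply id_apply)
qed

lemma models_copy_fm_uniquely_coloured:
  fixes ED :: "'d::finite \<Rightarrow> 'd \<Rightarrow> bool"
  assumes "is_core ED" and "\<forall>h. is_auto ED h \<longrightarrow> h = id" and "set ds = UNIV" and "n \<ge> 1"
  shows "{G \<in> coloured_graphs ED n. models {1..n} (\<lambda>x y. (x, y) \<in> fst G) (snd G) (copy_fm ED ds)}
    \<subseteq> uniquely_coloured_graphs ED n"
proof
  fix G
  assume "G \<in> {G \<in> coloured_graphs ED n. models {1..n} (\<lambda>x y. (x, y) \<in> fst G) (snd G) (copy_fm ED ds)}"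
  then obtain E h where G: "G = (E, h)" "(E, h) \<in> coloured_graphs ED n"
    and "models {1..n} (\<lambda>x y. (x, y) \<in> E) h (copy_fm ED ds)"
    by (cases G) simp
  then have "covered_by_copies ED {1..n} (\<lambda>x y. (x, y) \<in> E) h"
    using assms(4) models_copy_fm[OF assms(3), of "{1..n}"] by simp
  moreover have "h \<in> homs_to ED n E"
    using G(2) by (simp add: coloured_graphs_def)
  ultimately have "homs_to ED n E = {h}"
    by (rule homs_to_eq_singleton_if_covered[OF assms(1,2)])
  then show "G \<in> uniquely_coloured_graphs ED n"
    using G by (simp add: uniquely_coloured_graphs_def)
qed

lemma finite_coloured_graphs: "finite (coloured_graphs (ED :: 'd::finite \<Rightarrow> 'd \<Rightarrow> bool) n)"
proof (rule finite_subset)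
  show "coloured_graphs ED n \<subseteq> Pow ({1..n} \<times> {1..n}) \<times> ({1..n} \<rightarrow>\<^sub>E UNIV)"
    by (auto simp: coloured_graphs_def homs_to_def)
qed (simp add: finite_PiE)

lemma finite_csp_graphs: "finite (csp_graphs ED n)"
  by (rule finite_subset[of _ "Pow ({1..n} \<times> {1..n})"]) (auto simp: csp_graphs_def)

lemma card_csp_graphs_pos: "card (csp_graphs ED n) > 0"
proof -
  have "(\<lambda>_. undefined) \<in> homs_to ED n {}"
    by (auto simp: homs_to_def)
  then have "{} \<in> csp_graphs ED n"
    by (auto simp: csp_graphs_def)
  then show ?thesis
    using finite_csp_graphs card_gt_0_iff by blast
qed

lemma card_csp_graphs_le_coloured:
  "card (csp_graphs (ED :: 'd::finite \<Rightarrow> 'd \<Rightarrow> bool) n) \<le> card (coloured_graphs ED n)"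
proof (rule card_inj_on_le[OF _ _ finite_coloured_graphs])
  define col where "col E = (SOME h. h \<in> homs_to ED n E)" for E
  show "inj_on (\<lambda>E. (E, col E)) (csp_graphs ED n)"
    by (auto intro: inj_onI)
  show "(\<lambda>E. (E, col E)) ` csp_graphs ED n \<subseteq> coloured_graphs ED n"
    by (auto simp: col_def csp_graphs_def coloured_graphs_def) (metis someI)
qed

lemma card_uniquely_coloured_graphs:
  "card (uniquely_coloured_graphs ED n) = card {E \<in> csp_graphs ED n. card (homs_to ED n E) = 1}"
  (is "card ?A = card ?B")
proof (rule bij_betw_same_card[OF bij_betw_imageI])
  show "inj_on fst ?A"
    by (auto intro!: inj_onI simp: prod_eq_iff uniquely_coloured_graphs_def)
  show "fst ` ?A = ?B"
  proof (intro equalityI subsetI)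
    fix E
    assume "E \<in> fst ` ?A"
    then show "E \<in> ?B"
      by (auto simp: csp_graphs_def coloured_graphs_def uniquely_coloured_graphs_def)
  next
    fix E
    assume "E \<in> ?B"
    then obtain h where "homs_to ED n E = {h}" and "E \<subseteq> {1..n} \<times> {1..n}"
      by (auto simp: csp_graphs_def card_1_singleton_iff)
    then have "(E, h) \<in> ?A"
      by (simp add: coloured_graphs_def uniquely_coloured_graphs_def)
    then show "E \<in> fst ` ?A"
      by (rule rev_image_eqI) simp
  qed
qed

lemma unique_hom_ratio_tendsto_1:
  fixes ED :: "'d::finite \<Rightarrow> 'd \<Rightarrow> bool"
  assumes lim: "(\<lambda>n. real (card (T n)) / real (card (coloured_graphs ED n))) \<longlonglongrightarrow> 1"
    and unique: "\<forall>\<^sub>F n in sequentially. T n \<subseteq> uniquely_coloured_graphs ED n"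
  shows "(\<lambda>n. real (card {E \<in> csp_graphs ED n. card (homs_to ED n E) = 1})
              / real (card (csp_graphs ED n))) \<longlonglongrightarrow> 1"
proof (rule tendsto_sandwich[OF _ _ lim tendsto_const])
  define U where "U n = {E \<in> csp_graphs ED n. card (homs_to ED n E) = 1}" for n
  have csp_pos: "real (card (csp_graphs ED n)) > 0" for n
    using card_csp_graphs_pos by simp
  have "real (card (T n)) / real (card (coloured_graphs ED n)) \<le> real (card (U n)) / real (card (csp_graphs ED n))"
    if "T n \<subseteq> uniquely_coloured_graphs ED n" for n
  proof -
    have "card (T n) \<le> card (uniquely_coloured_graphs ED n)"
      using that by (intro card_mono finite_subset[OF _ finite_coloured_graphs])
        (auto simp: uniquely_coloured_graphs_def)
    also have "\<dots> = card (U n)"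
      unfolding U_def by (rule card_uniquely_coloured_graphs)
    finally have "card (T n) \<le> card (U n)" .
    then have "real (card (T n)) / real (card (coloured_graphs ED n)) \<le> real (card (U n)) / real (card (coloured_graphs ED n))"
      by (simp add: divide_right_mono)
    also have "\<dots> \<le> real (card (U n)) / real (card (csp_graphs ED n))"
      using csp_pos[of n] card_csp_graphs_le_coloured[of ED n] by (intro divide_left_mono) auto
    finally show ?thesis .
  qed
  then show "\<forall>\<^sub>F n in sequentially. real (card (T n)) / real (card (coloured_graphs ED n))
      \<le> real (card (U n)) / real (card (csp_graphs ED n))"
    using unique by (rule eventually_mono[rotated])
  have "card (U n) \<le> card (csp_graphs ED n)" for n
    by (rule card_mono[OF finite_csp_graphs]) (auto simp: U_def)
  then have "real (card (U n)) / real (card (csp_graphs ED n)) \<le> 1" for n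
    using csp_pos[of n] by (simp add: divide_le_eq_1)
  then show "\<forall>\<^sub>F n in sequentially. real (card (U n)) / real (card (csp_graphs ED n)) \<le> 1"
    by (simp add: always_eventually)
qed

theorem lemma4p15:
  fixes ED :: "'d::finite \<Rightarrow> 'd \<Rightarrow> bool"
  assumes "is_core ED"
    and "\<forall>h. is_auto ED h \<longrightarrow> h = id"
    and "\<forall>\<phi>. sentence \<phi> \<longrightarrow> (almost_sure_col ED \<phi> \<longleftrightarrow> theory_CD ED \<phi>)"
  shows "(\<lambda>n. real (card {E \<in> csp_graphs ED n. card (homs_to ED n E) = 1})
              / real (card (csp_graphs ED n))) \<longlonglongrightarrow> 1"
proof (cases "\<exists>u. ED u u")
  case True
  have "card (coloured_graphs ED n) > 0" for n
    using card_csp_graphs_pos[of ED n] card_csp_graphs_le_coloured[of ED n] by linarith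
  then have "real (card (coloured_graphs ED n)) / real (card (coloured_graphs ED n)) = 1" for n
    by simp
  then have "(\<lambda>n. real (card (coloured_graphs ED n)) / real (card (coloured_graphs ED n))) \<longlonglongrightarrow> 1"
    by simp
  moreover obtain u where "ED u u"
    using True by blast
  then have "uniquely_coloured_graphs ED n = coloured_graphs ED n" for n
    by (intro uniquely_coloured_graphs_trivial_target core_with_loop_trivial[OF assms(1)])
  then have "\<forall>\<^sub>F n in sequentially. coloured_graphs ED n \<subseteq> uniquely_coloured_graphs ED n"
    by simp
  ultimately show ?thesis
    by (rule unique_hom_ratio_tendsto_1)
next
  case False
  then have loopless: "\<forall>u. \<not> ED u u"
    by blast
  obtain ds :: "'d list" where ds: "set ds = UNIV"
    using finite_list[OF finite_UNIV] by blast
  have "almost_sure_col ED (copy_fm ED ds)"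
    using assms(3) sentence_copy_fm[OF ds] theory_CD_copy_fm[of ED, OF loopless ds] by simp
  moreover have "\<forall>\<^sub>F n in sequentially.
      {G \<in> coloured_graphs ED n. models {1..n} (\<lambda>x y. (x, y) \<in> fst G) (snd G) (copy_fm ED ds)}
      \<subseteq> uniquely_coloured_graphs ED n"
    using models_copy_fm_uniquely_coloured[OF assms(1,2) ds] by (rule eventually_sequentiallyI)
  ultimately show ?thesis
    unfolding almost_sure_col_def by (rule unique_hom_ratio_tendsto_1)
qed

end
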